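(* In the $n$-dimensional alcove gambler's ruin environment with a state-independent differentiable policy $\pi_{\vec\theta}$, for a trajectory starting at $\vec\eta\in\mathcal{D}^n_m$ and terminating at $\vec\nu\in\mathcal{H}^n_m$, the single-trajectory REINFORCE policy-gradient estimate is \[ \nabla_{\vec\theta} J = \Big[\sum_{i=1}^n (\nu_i - \eta_i)\,\nabla_{\vec\theta}\log\pi(a = \vec e_i\mid\vec\theta)\Big]\, G_{\vec\eta\vec\nu}, \] where $G_{\vec\eta\vec\nu} = \lambda_{\vec\nu} - \sum_{i=1}^n(\nu_i-\eta_i)$; hence the distribution of the gradient is obtained from the distribution of the terminal state $\vec\nu$, with $\Pr\{\vec s_T=\vec\nu\} = b_{\vec\eta\vec\nu'}\prod_{i}\pi(\vec e_i\mid\vec\theta)^{\nu'_i-\eta_i}\,\pi(a=\vec\nu-\vec\nu'\mid\vec\theta)$, where $\vec\nu'\in\mathcal{D}^n_m$ is the interior neighbour of $\vec\nu$ and $b_{\vec\eta\vec\nu'}$ is the number of positive-unit-step lattice paths from $\vec\eta$ to $\vec\nu'$ staying in $\mathcal{D}^n_m$.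
   Context: $\mathcal{D}^n_m = \{(x_1,\dots,x_n)\in\mathbb{Z}^n : x_1 > x_2 > \cdots > x_n > x_1 - m\}$ and $\mathcal{H}^n_m = \{x : x_i = x_{i+1} \text{ for some } 1\le i<n\}\cup\{x : x_1 - x_n = m\}$. The environment has states $\mathcal{D}^n_m\cup\mathcal{H}^n_m$, actions $\vec e_1,\dots,\vec e_n$ (action $\vec e_i$ moves $x$ to $x+\vec e_i$), terminating states $\mathcal{H}^n_m$, undiscounted reward $-1$ per step plus bonus $\lambda_{\vec s}$ on reaching terminating $\vec s$. The policy does not observe the state. The REINFORCE estimate with batch size one is $\big(\sum_t\nabla_{\vec\theta}\log\pi(a_t\mid\vec\theta)\big)G$, $G$ being the episodic return. *)

theory Defs
  imports "HOL-Analysis.Analysis"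
begin

text \<open>States are integer vectors of length n, represented as lists (0-based indices).
  Action i (for i < n) is the unit vector e_i.\<close>

definition alcoveD :: "nat \<Rightarrow> int \<Rightarrow> int list \<Rightarrow> bool" where
  "alcoveD n m x \<longleftrightarrow> length x = n \<and> n \<ge> 1 \<and>
     (\<forall>i. i + 1 < n \<longrightarrow> x ! i > x ! (i + 1)) \<and> x ! (n - 1) > x ! 0 - m"

definition alcoveH :: "nat \<Rightarrow> int \<Rightarrow> int list \<Rightarrow> bool" where
  "alcoveH n m x \<longleftrightarrow> length x = n \<and> n \<ge> 1 \<and>
     ((\<exists>i. i + 1 < n \<and> x ! i = x ! (i + 1)) \<or> x ! 0 - x ! (n - 1) = m)"

definition step :: "int list \<Rightarrow> nat \<Rightarrow> int list" where
  "step x i = x[i := x ! i + 1]"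

definition run :: "int list \<Rightarrow> nat list \<Rightarrow> int list" where
  "run x as = foldl step x as"

definition episode :: "nat \<Rightarrow> int \<Rightarrow> int list \<Rightarrow> nat list \<Rightarrow> bool" where
  "episode n m eta as \<longleftrightarrow> (\<forall>a\<in>set as. a < n) \<and>
     (\<forall>t < length as. alcoveD n m (run eta (take t as))) \<and> alcoveH n m (run eta as)"

text \<open>Episodic return: reward -1 per step plus the terminal bonus.\<close>
definition episode_return :: "(int list \<Rightarrow> real) \<Rightarrow> int list \<Rightarrow> nat list \<Rightarrow> real" where
  "episode_return lam eta as = lam (run eta as) - real (length as)"

definition grad :: "('p::real_inner \<Rightarrow> real) \<Rightarrow> 'p \<Rightarrow> 'p" where
  "grad f x = (THE D. GDERIV f x :> D)"

text \<open>Single-trajectory REINFORCE estimate (sum_t grad log pol(a_t | theta)) * G.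
  The policy pol theta i is the probability of action e_i; it does not depend on the state.\<close>
definition reinforce :: "('p::real_inner \<Rightarrow> nat \<Rightarrow> real) \<Rightarrow> 'p \<Rightarrow> (int list \<Rightarrow> real)
    \<Rightarrow> int list \<Rightarrow> nat list \<Rightarrow> 'p" where
  "reinforce pol theta lam eta as =
     episode_return lam eta as *\<^sub>R (\<Sum>t<length as. grad (\<lambda>th. ln (pol th (as ! t))) theta)"

definition term_prob :: "nat \<Rightarrow> int \<Rightarrow> ('p \<Rightarrow> nat \<Rightarrow> real) \<Rightarrow> 'p \<Rightarrow> int list \<Rightarrow> int list \<Rightarrow> real" where
  "term_prob n m pol theta eta nu =
     (\<Sum>as\<in>{as. episode n m eta as \<and> run eta as = nu}. \<Prod>t<length as. pol theta (as ! t))"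

definition num_paths :: "nat \<Rightarrow> int \<Rightarrow> int list \<Rightarrow> int list \<Rightarrow> nat" where
  "num_paths n m eta nu = card {as. (\<forall>a\<in>set as. a < n) \<and>
     (\<forall>t \<le> length as. alcoveD n m (run eta (take t as))) \<and> run eta as = nu}"

end

theory Submission
  imports Defs
begin

text \<open>Because the policy ignores the state, both the REINFORCE estimate and the probability of
  an action sequence depend on the sequence only through how often each action occurs, and
  these counts are the coordinate increments \<open>\<nu> - \<eta>\<close> of the final state. An episode ending
  at \<open>\<nu>\<close> on the boundary is an interior lattice path to some interior \<open>\<nu>'\<close> followed by one
  last step, and the pair (\<open>\<nu>'\<close>, last action) is determined by \<open>\<nu>\<close>; so the episodes ending
  at \<open>\<nu>\<close> are in bijection with the interior paths to \<open>\<nu>'\<close>, all of the same probability.\<close>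

lemma sum_nth_eq_sum_count_scaleR:
  fixes f :: "'a \<Rightarrow> 'b::real_vector"
  assumes "set xs \<subseteq> X" "finite X"
  shows "(\<Sum>t<length xs. f (xs ! t)) = (\<Sum>x\<in>X. real (count_list xs x) *\<^sub>R f x)"
  using assms(1)
proof (induction xs)
  case (Cons a xs)
  have "(\<Sum>t<length (a # xs). f ((a # xs) ! t)) = f a + (\<Sum>t<length xs. f (xs ! t))"
    unfolding length_Cons sum.lessThan_Suc_shift by simp
  also have "\<dots> = (\<Sum>x\<in>X. (if x = a then f a else 0)) + (\<Sum>x\<in>X. real (count_list xs x) *\<^sub>R f x)"
    using Cons assms(2) by (simp add: sum.delta')
  also have "\<dots> = (\<Sum>x\<in>X. real (count_list (a # xs) x) *\<^sub>R f x)"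
    unfolding sum.distrib [symmetric] by (intro sum.cong) (auto simp: scaleR_add_left)
  finally show ?case .
qed simp

lemma prod_nth_eq_prod_power_count:
  fixes g :: "'a \<Rightarrow> 'b::comm_monoid_mult"
  assumes "set xs \<subseteq> X" "finite X"
  shows "(\<Prod>t<length xs. g (xs ! t)) = (\<Prod>x\<in>X. g x ^ count_list xs x)"
  using assms(1)
proof (induction xs)
  case (Cons a xs)
  have "(\<Prod>t<length (a # xs). g ((a # xs) ! t)) = g a * (\<Prod>t<length xs. g (xs ! t))"
    unfolding length_Cons prod.lessThan_Suc_shift by simp
  also have "\<dots> = (\<Prod>x\<in>X. (if x = a then g a else 1)) * (\<Prod>x\<in>X. g x ^ count_list xs x)"
    using Cons assms(2) by (simp add: prod.delta')
  also have "\<dots> = (\<Prod>x\<in>X. g x ^ count_list (a # xs) x)"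
    unfolding prod.distrib [symmetric] by (intro prod.cong) (auto simp: mult.commute)
  finally show ?case .
qed simp

lemma run_Nil [simp]: "run x [] = x"
  by (simp add: run_def)

lemma run_snoc [simp]: "run x (as @ [a]) = step (run x as) a"
  by (simp add: run_def)

lemma length_step [simp]: "length (step x i) = length x"
  by (simp add: step_def)

lemma nth_step: "k < length x \<Longrightarrow> step x i ! k = x ! k + (if k = i then 1 else 0)"
  by (simp add: step_def nth_list_update)

lemma length_run [simp]: "length (run x as) = length x"
  by (induction as rule: rev_induct) simp_all

lemma nth_run: "i < length x \<Longrightarrow> run x as ! i = x ! i + int (count_list as i)"
  by (induction as rule: rev_induct) (simp_all add: nth_step)

lemma alcoveD_not_alcoveH: "alcoveD n m x \<Longrightarrow> \<not> alcoveH n m x"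
  unfolding alcoveD_def alcoveH_def by force

text \<open>Without the boundary hypothesis this fails: two interior states differing by
  \<open>e\<^sub>k - e\<^sub>j\<close> have a common successor. On the boundary, however, the equality or
  width constraint that became tight pins down which coordinate was just raised.\<close>

lemma step_into_alcoveH_unique:
  assumes x: "alcoveD n m x" and y: "alcoveD n m y" and "j < n" "k < n"
    and eq: "step x j = step y k" and H: "alcoveH n m (step x j)"
  shows "x = y \<and> j = k"
proof -
  have len: "length x = n" "length y = n"
    using x y by (simp_all add: alcoveD_def)
  have sx: "\<And>i. i < n \<Longrightarrow> step x j ! i = x ! i + (if i = j then 1 else 0)"
   and sy: "\<And>i. i < n \<Longrightarrow> step x j ! i = y ! i + (if i = k then 1 else 0)"
    using len eq nth_step by metis+
  have "j = k"
  proof -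
    from H consider (tie) i where "i + 1 < n" "step x j ! i = step x j ! (i + 1)"
      | (width) "step x j ! 0 - step x j ! (n - 1) = m"
      unfolding alcoveH_def by blast
    then show ?thesis
    proof cases
      case (tie i)
      moreover have "x ! i > x ! (i + 1)" "y ! i > y ! (i + 1)"
        using x y tie(1) by (simp_all add: alcoveD_def)
      ultimately show ?thesis
        using sx[of i] sx[of "i + 1"] sy[of i] sy[of "i + 1"] by (auto split: if_splits)
    next
      case width
      moreover have "x ! (n - 1) > x ! 0 - m" "y ! (n - 1) > y ! 0 - m"
        using x y by (simp_all add: alcoveD_def)
      ultimately show ?thesis
        using sx[of 0] sx[of "n - 1"] sy[of 0] sy[of "n - 1"] \<open>j < n\<close> \<open>k < n\<close>
        by (auto split: if_splits)
    qed
  qed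
  moreover have "x = y"
    using len sx sy \<open>j = k\<close> by (intro nth_equalityI) auto
  ultimately show ?thesis by simp
qed

definition alcove_paths :: "nat \<Rightarrow> int \<Rightarrow> int list \<Rightarrow> int list \<Rightarrow> nat list set" where
  "alcove_paths n m eta nu = {as. (\<forall>a\<in>set as. a < n) \<and>
     (\<forall>t \<le> length as. alcoveD n m (run eta (take t as))) \<and> run eta as = nu}"

lemma num_paths_eq_card_alcove_paths: "num_paths n m eta nu = card (alcove_paths n m eta nu)"
  by (simp add: num_paths_def alcove_paths_def)

lemma episode_snoc_iff:
  "episode n m eta (bs @ [k]) \<longleftrightarrow> k < n \<and> (\<forall>a\<in>set bs. a < n) \<and>
     (\<forall>t \<le> length bs. alcoveD n m (run eta (take t bs))) \<and> alcoveH n m (step (run eta bs) k)"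
proof -
  have "(\<forall>t < length (bs @ [k]). alcoveD n m (run eta (take t (bs @ [k])))) \<longleftrightarrow>
        (\<forall>t \<le> length bs. alcoveD n m (run eta (take t bs)))"
    by (auto simp: less_Suc_eq_le)
  then show ?thesis
    unfolding episode_def by auto
qed

lemma episodes_ending_at_step:
  assumes eta: "alcoveD n m eta" and nu': "alcoveD n m nu'" and "j < n"
    and H: "alcoveH n m (step nu' j)"
  shows "{as. episode n m eta as \<and> run eta as = step nu' j} =
         (\<lambda>bs. bs @ [j]) ` alcove_paths n m eta nu'"
proof (intro equalityI subsetI)
  fix as assume "as \<in> {as. episode n m eta as \<and> run eta as = step nu' j}"
  then have ep: "episode n m eta as" and end_as: "run eta as = step nu' j" by simp_all
  have "as \<noteq> []"
    using end_as H alcoveD_not_alcoveH [OF eta] by auto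
  then obtain bs k where as: "as = bs @ [k]"
    by (metis rev_exhaust)
  with ep have "k < n"
    and bs: "(\<forall>a\<in>set bs. a < n) \<and> (\<forall>t \<le> length bs. alcoveD n m (run eta (take t bs)))"
    by (simp_all add: episode_snoc_iff)
  then have "alcoveD n m (run eta bs)"
    by (metis order_refl take_all)
  then have "run eta bs = nu' \<and> k = j"
    using step_into_alcoveH_unique [OF _ nu' \<open>k < n\<close> \<open>j < n\<close>] end_as as H by simp
  with as bs show "as \<in> (\<lambda>bs. bs @ [j]) ` alcove_paths n m eta nu'"
    by (auto simp: alcove_paths_def)
next
  fix as assume "as \<in> (\<lambda>bs. bs @ [j]) ` alcove_paths n m eta nu'"
  then show "as \<in> {as. episode n m eta as \<and> run eta as = step nu' j}"
    using \<open>j < n\<close> H by (auto simp: alcove_paths_def episode_snoc_iff)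
qed

lemma reinforce_eq_increment_sum:
  assumes "length eta = n" and "\<forall>a\<in>set as. a < n"
  shows "reinforce pol theta lam eta as =
    (lam (run eta as) - real_of_int (\<Sum>i<n. run eta as ! i - eta ! i)) *\<^sub>R
    (\<Sum>i<n. real_of_int (run eta as ! i - eta ! i) *\<^sub>R grad (\<lambda>th. ln (pol th i)) theta)"
proof -
  have as: "set as \<subseteq> {..<n}"
    using assms(2) by auto
  have incr: "\<And>i. i < n \<Longrightarrow> run eta as ! i - eta ! i = int (count_list as i)"
    using assms(1) nth_run by simp
  have "(\<Sum>i<n. run eta as ! i - eta ! i) = int (length as)"
    using incr sum_count_set [OF as] by (simp flip: of_nat_sum)
  moreover have "(\<Sum>t<length as. grad (\<lambda>th. ln (pol th (as ! t))) theta) =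
      (\<Sum>i<n. real_of_int (run eta as ! i - eta ! i) *\<^sub>R grad (\<lambda>th. ln (pol th i)) theta)"
    using sum_nth_eq_sum_count_scaleR [OF as, of "\<lambda>i. grad (\<lambda>th. ln (pol th i)) theta"] incr
    by simp
  ultimately show ?thesis
    by (simp add: reinforce_def episode_return_def)
qed

lemma prob_alcove_path_snoc:
  assumes "length eta = n" and "bs \<in> alcove_paths n m eta nu'"
  shows "(\<Prod>t<length (bs @ [j]). p ((bs @ [j]) ! t)) =
         (\<Prod>i<n. p i ^ nat (nu' ! i - eta ! i)) * p j"
proof -
  have bs: "set bs \<subseteq> {..<n}" and end_bs: "run eta bs = nu'"
    using assms(2) by (auto simp: alcove_paths_def)
  have "(\<Prod>t<length (bs @ [j]). p ((bs @ [j]) ! t)) = (\<Prod>t<length bs. p (bs ! t)) * p j"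
    by (simp add: nth_append)
  also have "\<dots> = (\<Prod>i<n. p i ^ count_list bs i) * p j"
    by (simp add: prod_nth_eq_prod_power_count [OF bs])
  also have "\<dots> = (\<Prod>i<n. p i ^ nat (nu' ! i - eta ! i)) * p j"
    using assms(1) by (intro arg_cong2 [where f = "(*)"] prod.cong) (simp_all flip: end_bs add: nth_run)
  finally show ?thesis .
qed

lemma term_prob_step:
  assumes eta: "alcoveD n m eta" and "alcoveD n m nu'" "j < n" "alcoveH n m (step nu' j)"
  shows "term_prob n m pol theta eta (step nu' j) =
    real (num_paths n m eta nu') * (\<Prod>i<n. pol theta i ^ nat (nu' ! i - eta ! i)) * pol theta j"
proof -
  have "length eta = n"
    using eta by (simp add: alcoveD_def)
  have "term_prob n m pol theta eta (step nu' j) =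
      (\<Sum>bs\<in>alcove_paths n m eta nu'. \<Prod>t<length (bs @ [j]). pol theta ((bs @ [j]) ! t))"
    unfolding term_prob_def episodes_ending_at_step [OF assms]
    by (simp add: sum.reindex inj_on_def)
  also have "\<dots> = (\<Sum>bs\<in>alcove_paths n m eta nu'.
      (\<Prod>i<n. pol theta i ^ nat (nu' ! i - eta ! i)) * pol theta j)"
    by (intro sum.cong refl prob_alcove_path_snoc [OF \<open>length eta = n\<close>])
  finally show ?thesis
    by (simp add: num_paths_eq_card_alcove_paths)
qed

theorem corollary2:
  fixes n :: nat and m :: int
    and pol :: "'p::euclidean_space \<Rightarrow> nat \<Rightarrow> real" and theta :: 'p
    and lam :: "int list \<Rightarrow> real" and eta nu :: "int list"
  assumes n_pos: "n \<ge> 1"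
    and pi_pos: "\<And>th i. i < n \<Longrightarrow> pol th i > 0"
    and pi_sum: "\<And>th. (\<Sum>i<n. pol th i) = 1"
    and pi_diff: "\<And>th i. i < n \<Longrightarrow> (\<lambda>t. pol t i) differentiable (at th)"
    and eta_D: "alcoveD n m eta"
    and nu_H: "alcoveH n m nu"
  shows "(\<forall>as. episode n m eta as \<and> run eta as = nu \<longrightarrow>
            reinforce pol theta lam eta as =
              (lam nu - real_of_int (\<Sum>i<n. nu ! i - eta ! i)) *\<^sub>R
              (\<Sum>i<n. real_of_int (nu ! i - eta ! i) *\<^sub>R grad (\<lambda>th. ln (pol th i)) theta))
       \<and> (\<forall>nu' j. alcoveD n m nu' \<and> j < n \<and> nu = step nu' j \<longrightarrow>
            term_prob n m pol theta eta nu =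
              real (num_paths n m eta nu')
              * (\<Prod>i<n. pol theta i ^ nat (nu' ! i - eta ! i)) * pol theta j)"
proof (intro conjI allI impI)
  \<comment> \<open>Both identities are exact algebra on action counts.\<close>
  fix as assume "episode n m eta as \<and> run eta as = nu"
  then have "\<forall>a\<in>set as. a < n" and "run eta as = nu"
    by (simp_all add: episode_def)
  moreover have "length eta = n"
    using eta_D by (simp add: alcoveD_def)
  ultimately show "reinforce pol theta lam eta as =
      (lam nu - real_of_int (\<Sum>i<n. nu ! i - eta ! i)) *\<^sub>R
      (\<Sum>i<n. real_of_int (nu ! i - eta ! i) *\<^sub>R grad (\<lambda>th. ln (pol th i)) theta)"
    using reinforce_eq_increment_sum by blast
next
  fix nu' j assume "alcoveD n m nu' \<and> j < n \<and> nu = step nu' j"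
  with nu_H show "term_prob n m pol theta eta nu =
      real (num_paths n m eta nu') * (\<Prod>i<n. pol theta i ^ nat (nu' ! i - eta ! i)) * pol theta j"
    using term_prob_step [OF eta_D] by auto
qed

end
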